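(* Let $A$ be a (not necessarily associative or Lie) algebra over a field $\mathbb{F}$ with product $(x,y)\mapsto xy$. Then the set $\mathrm{BiDer}_r(A)$ of right biderivations of $A$, with pointwise vector space operations and bracket $\{B_1,B_2\}(x,y)=B_1(B_2(x,y),y)-B_2(B_1(x,y),y)$, is a Lie algebra over $\mathbb{F}$.
   Context: A right biderivation of an algebra $A$ is a map $B\colon A\times A\to A$ (not required to be linear in the second argument) which is linear in its first argument and satisfies $B(xy,z)=x\,B(y,z)+B(x,z)\,y$ for all $x,y,z\in A$. *)

theory Defs
  imports Main HOL.Vector_Spaces "HOL-Library.Function_Algebras"
begin

definition nonassoc_algebra :: "('f::field \<Rightarrow> 'a::ab_group_add \<Rightarrow> 'a) \<Rightarrow> ('a \<Rightarrow> 'a \<Rightarrow> 'a) \<Rightarrow> bool" where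
  "nonassoc_algebra scale mult \<longleftrightarrow>
     vector_space scale \<and>
     (\<forall>x. Vector_Spaces.linear scale scale (\<lambda>y. mult x y)) \<and>
     (\<forall>y. Vector_Spaces.linear scale scale (\<lambda>x. mult x y))"

definition right_biderivation :: "('f::field \<Rightarrow> 'a::ab_group_add \<Rightarrow> 'a) \<Rightarrow> ('a \<Rightarrow> 'a \<Rightarrow> 'a) \<Rightarrow> ('a \<Rightarrow> 'a \<Rightarrow> 'a) \<Rightarrow> bool" where
  "right_biderivation scale mult B \<longleftrightarrow>
     (\<forall>z. Vector_Spaces.linear scale scale (\<lambda>x. B x z)) \<and>
     (\<forall>x y z. B (mult x y) z = mult x (B y z) + mult (B x z) y)"

definition lie_algebra :: "('f::field \<Rightarrow> 'v::ab_group_add \<Rightarrow> 'v) \<Rightarrow> 'v set \<Rightarrow> ('v \<Rightarrow> 'v \<Rightarrow> 'v) \<Rightarrow> bool" where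
  "lie_algebra smul L br \<longleftrightarrow>
     vector_space smul \<and> module.subspace smul L \<and>
     (\<forall>x\<in>L. \<forall>y\<in>L. br x y \<in> L) \<and>
     (\<forall>x\<in>L. \<forall>y\<in>L. \<forall>z\<in>L. br (x + y) z = br x z + br y z \<and> br z (x + y) = br z x + br z y) \<and>
     (\<forall>c. \<forall>x\<in>L. \<forall>y\<in>L. br (smul c x) y = smul c (br x y) \<and> br x (smul c y) = smul c (br x y)) \<and>
     (\<forall>x\<in>L. br x x = 0) \<and>
     (\<forall>x\<in>L. \<forall>y\<in>L. \<forall>z\<in>L. br x (br y z) + br y (br z x) + br z (br x y) = 0)"

end

theory Submission
  imports Defs
begin

(* For each fixed y, a right biderivation B restricts to a derivation B(-,y) of A, and
   the bracket {B1,B2}(-,y) is the commutator of the derivations B1(-,y) and B2(-,y).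
   Commutators of derivations are derivations, so the bracket preserves right
   biderivations; bilinearity, alternation and the Jacobi identity are those of the
   commutator of linear maps, checked pointwise in y. *)

lemma vector_space_pointwise:
  assumes "vector_space scale"
  shows "vector_space (\<lambda>c f x. scale c (f x))"
proof -
  interpret vector_space scale by fact
  show ?thesis
    by unfold_locales (simp_all add: fun_eq_iff scale_right_distrib scale_left_distrib)
qed

definition bibracket :: "('a::ab_group_add \<Rightarrow> 'b \<Rightarrow> 'a) \<Rightarrow> ('a \<Rightarrow> 'b \<Rightarrow> 'a) \<Rightarrow> 'a \<Rightarrow> 'b \<Rightarrow> 'a" where
  "bibracket B1 B2 = (\<lambda>x y. B1 (B2 x y) y - B2 (B1 x y) y)"

lemma bibracket_self: "bibracket B B = 0"
  by (simp add: bibracket_def fun_eq_iff)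

context vector_space
begin

lemma bibracket_add_left:
  assumes "\<And>y. Vector_Spaces.linear scale scale (\<lambda>x. B3 x y)"
  shows "bibracket (B1 + B2) B3 = bibracket B1 B3 + bibracket B2 B3"
  using module_hom.add[OF linear.axioms(3)[OF assms]]
  by (simp add: bibracket_def fun_eq_iff)

lemma bibracket_add_right:
  assumes "\<And>y. Vector_Spaces.linear scale scale (\<lambda>x. B1 x y)"
  shows "bibracket B1 (B2 + B3) = bibracket B1 B2 + bibracket B1 B3"
  using module_hom.add[OF linear.axioms(3)[OF assms]]
  by (simp add: bibracket_def fun_eq_iff)

lemma bibracket_scale_left:
  assumes "\<And>y. Vector_Spaces.linear scale scale (\<lambda>x. B2 x y)"
  shows "bibracket (\<lambda>x y. scale c (B1 x y)) B2 = (\<lambda>x y. scale c (bibracket B1 B2 x y))"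
  using module_hom.scale[OF linear.axioms(3)[OF assms]]
  by (simp add: bibracket_def fun_eq_iff scale_right_diff_distrib)

lemma bibracket_scale_right:
  assumes "\<And>y. Vector_Spaces.linear scale scale (\<lambda>x. B1 x y)"
  shows "bibracket B1 (\<lambda>x y. scale c (B2 x y)) = (\<lambda>x y. scale c (bibracket B1 B2 x y))"
  using module_hom.scale[OF linear.axioms(3)[OF assms]]
  by (simp add: bibracket_def fun_eq_iff scale_right_diff_distrib)

lemma bibracket_jacobi:
  assumes "\<And>y. Vector_Spaces.linear scale scale (\<lambda>x. B1 x y)"
    and "\<And>y. Vector_Spaces.linear scale scale (\<lambda>x. B2 x y)"
    and "\<And>y. Vector_Spaces.linear scale scale (\<lambda>x. B3 x y)"
  shows "bibracket B1 (bibracket B2 B3) + bibracket B2 (bibracket B3 B1) + bibracket B3 (bibracket B1 B2) = 0"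
  using module_hom.diff[OF linear.axioms(3)[OF assms(1)]] module_hom.diff[OF linear.axioms(3)[OF assms(2)]]
    module_hom.diff[OF linear.axioms(3)[OF assms(3)]]
  by (simp add: bibracket_def fun_eq_iff)

end

locale bilinear_product = vector_space scale
  for scale :: "'f::field \<Rightarrow> 'a::ab_group_add \<Rightarrow> 'a" +
  fixes mult :: "'a \<Rightarrow> 'a \<Rightarrow> 'a"
  assumes linear_mult_left: "Vector_Spaces.linear scale scale (\<lambda>x. mult x y)"
    and linear_mult_right: "Vector_Spaces.linear scale scale (\<lambda>y. mult x y)"

lemma bilinear_product_iff_nonassoc_algebra:
  "bilinear_product scale mult \<longleftrightarrow> nonassoc_algebra scale mult"
  by (auto simp: bilinear_product_def bilinear_product_axioms_def nonassoc_algebra_def)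

sublocale bilinear_product \<subseteq> endo: vector_space_pair scale scale ..

context bilinear_product
begin

definition derivation :: "('a \<Rightarrow> 'a) \<Rightarrow> bool" where
  "derivation D \<longleftrightarrow> Vector_Spaces.linear scale scale D \<and>
     (\<forall>x y. D (mult x y) = mult x (D y) + mult (D x) y)"

lemma right_biderivation_iff_derivation:
  "right_biderivation scale mult B \<longleftrightarrow> (\<forall>z. derivation (\<lambda>x. B x z))"
  unfolding right_biderivation_def derivation_def by blast

lemma derivation_zero: "derivation (\<lambda>x. 0)"
  using endo.linear_0[OF linear_mult_left] endo.linear_0[OF linear_mult_right]
  by (simp add: derivation_def endo.linear_zero)

lemma derivation_add:
  assumes "derivation D" and "derivation E"
  shows "derivation (\<lambda>x. D x + E x)"
  using assms endo.linear_add[OF linear_mult_left] endo.linear_add[OF linear_mult_right]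
  by (simp add: derivation_def endo.linear_compose_add algebra_simps)

lemma derivation_scale:
  assumes "derivation D"
  shows "derivation (\<lambda>x. scale c (D x))"
  using assms endo.linear_scale[OF linear_mult_left] endo.linear_scale[OF linear_mult_right]
  by (simp add: derivation_def endo.linear_compose_scale_right scale_right_distrib)

lemma derivation_commutator:
  assumes D: "derivation D" and E: "derivation E"
  shows "derivation (\<lambda>x. D (E x) - E (D x))"
proof -
  have lin: "Vector_Spaces.linear scale scale D" "Vector_Spaces.linear scale scale E"
    and leibniz: "\<And>x y. D (mult x y) = mult x (D y) + mult (D x) y"
      "\<And>x y. E (mult x y) = mult x (E y) + mult (E x) y"
    using D E by (simp_all add: derivation_def)
  have "D (E (mult x y)) = mult x (D (E y)) + mult (D x) (E y) + mult (E x) (D y) + mult (D (E x)) y"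
    for x y by (simp add: leibniz endo.linear_add[OF lin(1)])
  moreover have "E (D (mult x y)) = mult x (E (D y)) + mult (E x) (D y) + mult (D x) (E y) + mult (E (D x)) y"
    for x y by (simp add: leibniz endo.linear_add[OF lin(2)])
  moreover have "Vector_Spaces.linear scale scale (\<lambda>x. D (E x) - E (D x))"
    using Vector_Spaces.linear_compose[OF lin(2) lin(1)] Vector_Spaces.linear_compose[OF lin(1) lin(2)]
    by (simp add: endo.linear_compose_sub o_def)
  ultimately show ?thesis
    by (simp add: derivation_def endo.linear_diff[OF linear_mult_left] endo.linear_diff[OF linear_mult_right])
qed

lemma vector_space_binary_functions: "vector_space (\<lambda>c B x y. scale c (B x y))"
  by (intro vector_space_pointwise vector_space_axioms)

lemma subspace_right_biderivations:
  "module.subspace (\<lambda>c B x y. scale c (B x y)) {B. right_biderivation scale mult B}"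
  by (intro module.subspaceI vector_space_binary_functions[folded module_iff_vector_space])
    (simp_all add: right_biderivation_iff_derivation derivation_zero derivation_add derivation_scale)

lemma right_biderivation_bibracket:
  assumes "right_biderivation scale mult B1" and "right_biderivation scale mult B2"
  shows "right_biderivation scale mult (bibracket B1 B2)"
proof -
  have "derivation (\<lambda>x. B1 (B2 x z) z - B2 (B1 x z) z)" for z
    using assms derivation_commutator[of "\<lambda>x. B1 x z" "\<lambda>x. B2 x z"]
    by (simp add: right_biderivation_iff_derivation)
  then show ?thesis
    by (simp add: right_biderivation_iff_derivation bibracket_def)
qed

lemma lie_algebra_right_biderivations:
  "lie_algebra (\<lambda>c B x y. scale c (B x y)) {B. right_biderivation scale mult B} bibracket"
proof -
  have linear_first: "Vector_Spaces.linear scale scale (\<lambda>x. B x y)"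
    if "right_biderivation scale mult B" for B y
    using that by (simp add: right_biderivation_def)
  show ?thesis
    unfolding lie_algebra_def
    by (auto simp: vector_space_binary_functions subspace_right_biderivations right_biderivation_bibracket
        bibracket_self bibracket_add_left bibracket_add_right bibracket_scale_left bibracket_scale_right
        bibracket_jacobi linear_first)
qed

end

theorem mainTheorem6:
  fixes scale :: "'f::field \<Rightarrow> 'a::ab_group_add \<Rightarrow> 'a"
    and mult :: "'a \<Rightarrow> 'a \<Rightarrow> 'a"
  assumes "nonassoc_algebra scale mult"
  shows "lie_algebra (\<lambda>c B. \<lambda>x y. scale c (B x y))
           {B. right_biderivation scale mult B}
           (\<lambda>B1 B2. \<lambda>x y. B1 (B2 x y) y - B2 (B1 x y) y)"
proof -
  interpret bilinear_product scale mult
    using assms by (simp add: bilinear_product_iff_nonassoc_algebra)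
  show ?thesis
    using lie_algebra_right_biderivations by (simp add: bibracket_def [abs_def])
qed

end
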